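(* Let $s\ge 3$ and let $\lambda$ be an $(s,s+1,s+2)$-core partition of maximum size among all $(s,s+1,s+2)$-core partitions. If $\beta(\lambda)$ contains an element $i\in B_k$ (for some $0\le k\le \lfloor s/2\rfloor-1$), then $\beta(\lambda)$ contains every integer in $\{i,i+1,\ldots,(k+1)s-1\}$.
   Context: The $\beta$-set $\beta(\lambda)$ of a partition is the set of hook lengths of the boxes in its first column. An $(s,s+1,s+2)$-core is a partition with no hook length divisible by $s$, $s+1$ or $s+2$. For $s\ge 3$ and $0\le k\le\lfloor s/2\rfloor-1$, $B_k=\{1+k(s+2),\ldots,(k+1)s-1\}$; these sets partition the set $T_s$ of positive integers not expressible as $k_1s+k_2(s+1)+k_3(s+2)$ with $k_i\in\mathbb{N}$, and $\beta$-sets of $(s,s+1,s+2)$-cores are exactly the order ideals of $T_s$ under the order generated by $y>y-a$ for $y,y-a\in T_s$, $a\in\{s,s+1,s+2\}$. *)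

theory Defs
  imports Main
begin

definition is_partition :: "nat list \<Rightarrow> bool" where
  "is_partition xs \<longleftrightarrow> sorted_wrt (\<ge>) xs \<and> (\<forall>x\<in>set xs. 0 < x)"

definition psize :: "nat list \<Rightarrow> nat" where
  "psize xs = sum_list xs"

definition leg :: "nat list \<Rightarrow> nat \<Rightarrow> nat \<Rightarrow> nat" where
  "leg xs i j = card {i'. i < i' \<and> i' < length xs \<and> j < xs ! i'}"

definition hook :: "nat list \<Rightarrow> nat \<Rightarrow> nat \<Rightarrow> nat" where
  "hook xs i j = (xs ! i - j - 1) + leg xs i j + 1"

definition hooks :: "nat list \<Rightarrow> nat set" where
  "hooks xs = {hook xs i j | i j. i < length xs \<and> j < xs ! i}"

definition beta :: "nat list \<Rightarrow> nat set" where
  "beta xs = {hook xs i 0 | i. i < length xs}"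

definition is_core3 :: "nat \<Rightarrow> nat list \<Rightarrow> bool" where
  "is_core3 s xs \<longleftrightarrow> (\<forall>h\<in>hooks xs. \<not> s dvd h \<and> \<not> (s+1) dvd h \<and> \<not> (s+2) dvd h)"

definition Bset :: "nat \<Rightarrow> nat \<Rightarrow> nat set" where
  "Bset s k = {1 + k*(s+2) .. (k+1)*s - 1}"

end

theory Submission
  imports Defs
begin

(*
  A partition is encoded by its beta-set (the first-column hook lengths),
  and its hook lengths are exactly the differences x - y with x in the beta-set and
  y < x outside it.  Hence a partition is an (s,s+1,s+2)-core iff its beta-set X is
  "step-closed": x in X and a in {s,s+1,s+2}, a <= x imply x - a in X.  Every finite
  set of positive integers is a beta-set, and for partitions of equal length the
  sizes compare like the sums of the beta-sets.

  A step-closed set X with 0 not in X lies in the union of the blocks B_t, t < s div 2,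
  and each nonempty layer X /\ B_(t+1) has at least two elements fewer than X /\ B_t.
  "Compressing" every layer to the topmost segment of the same cardinality below
  (t+1)s therefore gives another step-closed set with the same cardinality and at
  least the same sum, strictly larger unless every layer already is such a segment.
  For a core of maximum size this forces every layer to be a top segment, which is
  exactly the statement of the theorem.
*)

section \<open>Beta-sets of partitions\<close>

definition first_hook :: "nat list \<Rightarrow> nat \<Rightarrow> nat" where
  "first_hook xs i = xs!i + (length xs - 1 - i)"

lemma partition_part_pos: "is_partition xs \<Longrightarrow> i < length xs \<Longrightarrow> 0 < xs!i"
  unfolding is_partition_def by (auto simp: nth_mem)

lemma partition_antimono:
  assumes "is_partition xs" "i \<le> i'" "i' < length xs"
  shows "xs!i' \<le> xs!i"
proof (cases "i = i'")
  case False
  then show ?thesis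
    using assms sorted_wrt_nth_less[of "(\<ge>)" xs i i'] unfolding is_partition_def by simp
qed simp

text \<open>Since all parts are positive, every lower row reaches column 0.\<close>
lemma hook_first_column:
  assumes "is_partition xs" "i < length xs"
  shows "hook xs i 0 = first_hook xs i"
proof -
  have "{i'. i < i' \<and> i' < length xs \<and> 0 < xs ! i'} = {i<..<length xs}"
    using partition_part_pos[OF assms(1)] by auto
  then have "leg xs i 0 = length xs - Suc i" unfolding leg_def by simp
  then show ?thesis using partition_part_pos[OF assms] unfolding hook_def first_hook_def by simp
qed

lemma beta_eq_image: "is_partition xs \<Longrightarrow> beta xs = first_hook xs ` {..<length xs}"
  unfolding beta_def image_def by (auto simp: hook_first_column) (metis hook_first_column)

lemma first_hook_strict_decreasing:
  "is_partition xs \<Longrightarrow> i < i' \<Longrightarrow> i' < length xs \<Longrightarrow> first_hook xs i' < first_hook xs i"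
  using partition_antimono[of xs i i'] unfolding first_hook_def by simp

lemma first_hook_inj: "is_partition xs \<Longrightarrow> inj_on (first_hook xs) {..<length xs}"
  by (rule inj_onI) (metis first_hook_strict_decreasing lessThan_iff linorder_neqE_nat less_irrefl)

lemma finite_beta: "is_partition xs \<Longrightarrow> finite (beta xs)"
  by (simp add: beta_eq_image)

lemma card_beta: "is_partition xs \<Longrightarrow> card (beta xs) = length xs"
  by (simp add: beta_eq_image card_image first_hook_inj)

lemma zero_notin_beta: "is_partition xs \<Longrightarrow> 0 \<notin> beta xs"
  using partition_part_pos by (fastforce simp: beta_eq_image first_hook_def)

lemma psize_plus_triangle:
  assumes "is_partition xs"
  shows "psize xs + (\<Sum>i<length xs. length xs - 1 - i) = \<Sum>(beta xs)"
proof -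
  have "\<Sum>(beta xs) = (\<Sum>i<length xs. first_hook xs i)"
    by (simp add: beta_eq_image[OF assms] sum.reindex[OF first_hook_inj[OF assms]])
  also have "\<dots> = (\<Sum>i<length xs. xs!i) + (\<Sum>i<length xs. length xs - 1 - i)"
    unfolding first_hook_def by (simp only: sum.distrib)
  finally show ?thesis unfolding psize_def by (simp add: sum_list_sum_nth atLeast0LessThan)
qed

lemma psize_less_if_beta_sum_less:
  assumes "is_partition xs" "is_partition ys" "length xs = length ys"
    and "\<Sum>(beta xs) < \<Sum>(beta ys)"
  shows "psize xs < psize ys"
  using assms psize_plus_triangle[OF assms(1)] psize_plus_triangle[OF assms(2)] by simp

lemma strict_sorted_gap:
  assumes "sorted_wrt (<) l" "i \<le> j" "j < length l"
  shows "l!i + (j - i) \<le> l!j"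
  using assms(2,3)
proof (induction j)
  case (Suc j)
  show ?case
  proof (cases "i = Suc j")
    case False
    then have "l!i + (j - i) \<le> l!j" using Suc by simp
    moreover have "l!j < l!Suc j" using sorted_wrt_nth_less[OF assms(1)] Suc.prems by simp
    ultimately show ?thesis using False Suc.prems by simp
  qed simp
qed simp

text \<open>Every finite set of positive integers is the beta-set of a partition: listing it
  increasingly as l, the parts are l!m - m in reverse order.\<close>
lemma beta_surj:
  assumes fin: "finite X" and pos: "0 \<notin> X"
  shows "\<exists>mu. is_partition mu \<and> beta mu = X \<and> length mu = card X"
proof -
  obtain l where l: "sorted_wrt (<) l" "set l = X" "length l = card X"
    using finite_set_strict_sorted[OF fin] by blast
  define n where "n = length l"
  define f where "f m = l!m - m" for m
  define mu where "mu = rev (map f [0..<n])"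
  have above_index: "m < l!m" if "m < n" for m
  proof -
    have "0 < length l" using that n_def by linarith
    then have "l!0 \<in> X" using l(2) nth_mem by blast
    then have "0 < l!0" using pos by (cases "l!0") auto
    then show ?thesis using strict_sorted_gap[OF l(1), of 0 m] that n_def by simp
  qed
  have f_mono: "f i \<le> f j" if "i < j" "j < n" for i j
    using strict_sorted_gap[OF l(1), of i j] that above_index[of i] unfolding f_def n_def by simp
  have len: "length mu = n" unfolding mu_def by simp
  have P: "is_partition mu"
    unfolding is_partition_def
  proof
    show "sorted_wrt (\<ge>) mu" unfolding mu_def sorted_wrt_rev
      by (auto simp: sorted_wrt_iff_nth_less intro: f_mono)
    show "\<forall>x\<in>set mu. 0 < x" unfolding mu_def f_def using above_index by auto
  qed
  have hook_mu: "first_hook mu i = l!(n - Suc i)" if "i < n" for i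
    using above_index[of "n - Suc i"] that len
    unfolding first_hook_def mu_def f_def by (simp add: rev_nth)
  have "beta mu = X"
  proof
    show "beta mu \<subseteq> X"
      using hook_mu l(2) n_def len by (auto simp: beta_eq_image[OF P])
    show "X \<subseteq> beta mu"
    proof
      fix x assume "x \<in> X"
      then obtain m where m: "m < n" "x = l!m" using l(2) n_def by (auto simp: in_set_conv_nth)
      then have "x = first_hook mu (n - Suc m)" using hook_mu[of "n - Suc m"] by simp
      then show "x \<in> beta mu" using m len by (auto simp: beta_eq_image[OF P])
    qed
  qed
  then show ?thesis using P len n_def l(3) by auto
qed

section \<open>Hook lengths as differences of beta-numbers\<close>

definition col_len :: "nat list \<Rightarrow> nat \<Rightarrow> nat" where
  "col_len xs j = card {i'. i' < length xs \<and> j < xs!i'}"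

lemma down_closed_eq_lessThan:
  assumes "finite P" "\<And>a b. b \<in> P \<Longrightarrow> a < b \<Longrightarrow> a \<in> P"
  shows "P = {..<card P}"
proof (cases "P = {}")
  case False
  have "P = {..Max P}"
  proof
    show "P \<subseteq> {..Max P}" using assms(1) by auto
    show "{..Max P} \<subseteq> P"
      using assms(2) Max_in[OF assms(1) False] by (auto simp: order.order_iff_strict)
  qed
  then show ?thesis by (metis card_lessThan lessThan_Suc_atMost)
qed simp

lemma col_len_rows:
  assumes "is_partition xs"
  shows "{i'. i' < length xs \<and> j < xs!i'} = {..<col_len xs j}"
  unfolding col_len_def
proof (rule down_closed_eq_lessThan)
  fix a b assume "b \<in> {i'. i' < length xs \<and> j < xs ! i'}" "a < b"
  then show "a \<in> {i'. i' < length xs \<and> j < xs ! i'}"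
    using partition_antimono[OF assms, of a b] by simp
qed simp

lemma col_len_le: "col_len xs j \<le> length xs"
  unfolding col_len_def by (rule order.trans[OF card_mono card_lessThan[THEN eq_imp_le]]) auto

lemma col_len_antimono: "j \<le> j' \<Longrightarrow> col_len xs j' \<le> col_len xs j"
  unfolding col_len_def by (rule card_mono) auto

text \<open>The number attached to column j: it is never a beta-number, and the hook of box
  (i,j) is the first-column hook of row i minus this number.\<close>
definition col_gap :: "nat list \<Rightarrow> nat \<Rightarrow> nat" where
  "col_gap xs j = j + length xs - col_len xs j"

lemma hook_eq_difference:
  assumes P: "is_partition xs" and i: "i < length xs" and j: "j < xs!i"
  shows "hook xs i j = first_hook xs i - col_gap xs j"
    and "col_gap xs j < first_hook xs i"
proof -
  let ?n = "length xs" and ?c = "col_len xs j"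
  have rows: "{i'. i' < ?n \<and> j < xs!i'} = {..<?c}" by (rule col_len_rows[OF P])
  have ic: "i < ?c" using rows i j by blast
  have "{i'. i < i' \<and> i' < ?n \<and> j < xs!i'} = {i'. i' < ?n \<and> j < xs!i'} \<inter> {i<..}"
    by blast
  also have "\<dots> = {i<..<?c}" unfolding rows by auto
  finally have "leg xs i j = ?c - Suc i" unfolding leg_def by simp
  then show "hook xs i j = first_hook xs i - col_gap xs j"
    unfolding hook_def first_hook_def col_gap_def using ic col_len_le[of xs j] j by linarith
  show "col_gap xs j < first_hook xs i"
    unfolding first_hook_def col_gap_def using ic col_len_le[of xs j] j i by simp
qed

lemma col_gap_notin_beta:
  assumes P: "is_partition xs"
  shows "col_gap xs j \<notin> beta xs"
proof
  let ?n = "length xs" and ?c = "col_len xs j"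
  assume "col_gap xs j \<in> beta xs"
  then obtain i where i: "i < ?n" "col_gap xs j = first_hook xs i"
    using beta_eq_image[OF P] by auto
  have "i < ?c \<longleftrightarrow> j < xs!i" using col_len_rows[OF P, of j] i(1) by blast
  then show False using i col_len_le[of xs j] unfolding first_hook_def col_gap_def
    by (cases "i < ?c") linarith+
qed

text \<open>The column numbers of row i are exactly the non-beta-numbers below its first-column
  hook (a counting argument: both sets have xs!i elements).\<close>
lemma col_gap_image:
  assumes P: "is_partition xs" and i: "i < length xs"
  shows "col_gap xs ` {..<xs!i} = {z. z < first_hook xs i \<and> z \<notin> beta xs}"
    (is "?G = ?Y")
proof -
  let ?n = "length xs"
  have sub: "?G \<subseteq> ?Y" using hook_eq_difference(2)[OF P i] col_gap_notin_beta[OF P] by auto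
  have "strict_mono (col_gap xs)"
  proof (rule strict_monoI)
    fix j j' :: nat assume "j < j'"
    then show "col_gap xs j < col_gap xs j'"
      using col_len_antimono[of j j' xs] col_len_le[of xs j] col_len_le[of xs j']
      unfolding col_gap_def by simp
  qed
  then have card_G: "card ?G = xs!i"
    by (simp add: card_image strict_mono_imp_inj_on)
  have "beta xs \<inter> {..<first_hook xs i} = first_hook xs ` {i<..<?n}"
  proof -
    have "first_hook xs i' < first_hook xs i \<longleftrightarrow> i < i'" if "i' < ?n" for i'
      using first_hook_strict_decreasing[OF P] i that by (metis less_asym linorder_neqE_nat)
    then show ?thesis unfolding beta_eq_image[OF P] by auto
  qed
  moreover have "inj_on (first_hook xs) {i<..<?n}"
    by (rule inj_on_subset[OF first_hook_inj[OF P]]) auto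
  ultimately have "card (beta xs \<inter> {..<first_hook xs i}) = ?n - Suc i"
    by (simp add: card_image)
  moreover have "?Y = {..<first_hook xs i} - (beta xs \<inter> {..<first_hook xs i})" by auto
  ultimately have "card ?Y = xs!i"
    unfolding first_hook_def by (simp add: card_Diff_subset)
  then show ?thesis using card_subset_eq[OF _ sub] card_G by simp
qed

lemma hooks_eq_beta_differences:
  assumes P: "is_partition xs"
  shows "hooks xs = {x - y | x y. x \<in> beta xs \<and> y \<notin> beta xs \<and> y < x}"
proof (intro equalityI subsetI)
  fix h assume "h \<in> hooks xs"
  then obtain i j where ij: "i < length xs" "j < xs!i" "h = hook xs i j"
    unfolding hooks_def by auto
  then show "h \<in> {x - y | x y. x \<in> beta xs \<and> y \<notin> beta xs \<and> y < x}"
    using hook_eq_difference[OF P ij(1,2)] col_gap_notin_beta[OF P] beta_eq_image[OF P]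
    by blast
next
  fix h assume "h \<in> {x - y | x y. x \<in> beta xs \<and> y \<notin> beta xs \<and> y < x}"
  then obtain x y where xy: "x \<in> beta xs" "y \<notin> beta xs" "y < x" "h = x - y" by blast
  obtain i where i: "i < length xs" "x = first_hook xs i" using xy(1) beta_eq_image[OF P] by auto
  then obtain j where j: "j < xs!i" "y = col_gap xs j"
    using col_gap_image[OF P i(1)] xy by blast
  then have "h = hook xs i j" using hook_eq_difference(1)[OF P i(1) j(1)] i xy by simp
  then show "h \<in> hooks xs" unfolding hooks_def using i(1) j(1) by blast
qed

section \<open>Cores and step-closed sets\<close>

definition step_closed :: "nat \<Rightarrow> nat set \<Rightarrow> bool" where
  "step_closed s X \<longleftrightarrow> (\<forall>x\<in>X. \<forall>a\<in>{s, s+1, s+2}. a \<le> x \<longrightarrow> x - a \<in> X)"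

lemma step_closed_iterate:
  assumes "step_closed s X" "x \<in> X" "a \<in> {s, s+1, s+2}" "m*a \<le> x"
  shows "x - m*a \<in> X"
  using assms(4)
proof (induction m)
  case (Suc m)
  then have "x - m*a \<in> X" "a \<le> x - m*a" by simp_all
  then have "x - m*a - a \<in> X" using assms(1,3) unfolding step_closed_def by blast
  then show ?case by (simp add: algebra_simps)
qed (use assms(2) in simp)

lemma core_iff_step_closed:
  assumes P: "is_partition xs" and s: "0 < s"
  shows "is_core3 s xs \<longleftrightarrow> step_closed s (beta xs)"
proof
  assume core: "is_core3 s xs"
  show "step_closed s (beta xs)"
    unfolding step_closed_def
  proof (intro ballI impI)
    fix x a assume x: "x \<in> beta xs" and a: "a \<in> {s, s+1, s+2}" and ax: "a \<le> x"
    show "x - a \<in> beta xs"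
    proof (rule ccontr)
      assume "x - a \<notin> beta xs"
      moreover have "x - a < x" using a ax s by auto
      ultimately have "x - (x - a) \<in> hooks xs"
        unfolding hooks_eq_beta_differences[OF P] using x by blast
      then have "a \<in> hooks xs" using ax by simp
      moreover have "s dvd a \<or> (s+1) dvd a \<or> (s+2) dvd a" using a by auto
      ultimately show False using core unfolding is_core3_def by blast
    qed
  qed
next
  assume closed: "step_closed s (beta xs)"
  show "is_core3 s xs"
    unfolding is_core3_def
  proof
    fix h assume "h \<in> hooks xs"
    then obtain x y where xy: "x \<in> beta xs" "y \<notin> beta xs" "y < x" "h = x - y"
      unfolding hooks_eq_beta_differences[OF P] by blast
    have False if a: "a \<in> {s, s+1, s+2}" and "a dvd h" for a
    proof -
      obtain m where "x - y = m*a" using \<open>a dvd h\<close> xy(4) by (metis dvd_def mult.commute)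
      then have "x - m*a \<in> beta xs" "x - m*a = y"
        using step_closed_iterate[OF closed xy(1) a] xy(3) by simp_all
      then show False using xy(2) by simp
    qed
    then show "\<not> s dvd h \<and> \<not> (s + 1) dvd h \<and> \<not> (s + 2) dvd h" by blast
  qed
qed

lemma Bset_iff: "x \<in> Bset s k \<longleftrightarrow> k*s + 2*k + 1 \<le> x \<and> x + 1 \<le> k*s + s"
proof -
  have "k*(s+2) = k*s + 2*k" "(k+1)*s = k*s + s" by (simp_all add: algebra_simps)
  then show ?thesis unfolding Bset_def atLeastAtMost_iff by arith
qed

lemma Bset_subset: "Bset s k \<subseteq> {k*s+1..<(k+1)*s}"
  by (auto simp: Bset_iff)

lemma Bset_div: "x \<in> Bset s k \<Longrightarrow> x div s = k"
  by (rule div_nat_eqI) (auto simp: Bset_iff algebra_simps)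

lemma Bset_disjoint: "t \<noteq> t' \<Longrightarrow> Bset s t \<inter> Bset s t' = {}"
  using Bset_div by blast

lemma card_subset_Bset: "A \<subseteq> Bset s k \<Longrightarrow> card A \<le> s - 1"
  using card_mono[OF _ order.trans[OF _ Bset_subset]] by fastforce

lemma Bset_step_down:
  assumes "x \<in> Bset s (Suc k)" "a \<in> {s, s+1, s+2}"
  shows "a \<le> x \<and> x - a \<in> Bset s k"
  using assms unfolding Bset_iff by (auto simp: algebra_simps)

text \<open>A step-closed set avoiding 0 avoids every interval [ks, k(s+2)]: such a number
  reaches one of these intervals for k-1 by a single step.\<close>
lemma step_closed_avoids_gaps:
  assumes closed: "step_closed s X" and pos: "0 \<notin> X"
  shows "k*s \<le> x \<Longrightarrow> x \<le> k*(s+2) \<Longrightarrow> x \<notin> X"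
proof (induction k arbitrary: x)
  case (Suc k)
  have low: "k*s + s \<le> x" and high: "x \<le> k*s + 2*k + s + 2"
    using Suc.prems by (simp_all add: algebra_simps)
  show ?case
  proof
    assume x: "x \<in> X"
    define a where "a = (if x - k*s \<le> s + 2 then x - k*s else s + 2)"
    have a: "a \<in> {s, s+1, s+2}" "a \<le> x" using low unfolding a_def by auto
    have "x - a \<in> X" using closed x a unfolding step_closed_def by blast
    moreover have "k*s \<le> x - a" "x - a \<le> k*(s+2)"
      using low high unfolding a_def by (auto simp: algebra_simps split: if_splits)
    ultimately show False using Suc.IH by blast
  qed
qed (use pos in simp)

lemma step_closed_in_blocks:
  assumes closed: "step_closed s X" and pos: "0 \<notin> X" and x: "x \<in> X" and s: "0 < s"
  shows "x \<in> Bset s (x div s) \<and> x div s < s div 2"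
proof -
  define k where "k = x div s"
  define r where "r = x mod s"
  have x_eq: "x = k*s + r" and r: "r < s" unfolding k_def r_def using s by simp_all
  have "2*k < r"
  proof (rule ccontr)
    assume "\<not> 2*k < r"
    then have "k*s \<le> x" "x \<le> k*(s+2)" using x_eq by (simp_all add: algebra_simps)
    then show False using step_closed_avoids_gaps[OF closed pos] x by blast
  qed
  then show ?thesis unfolding k_def[symmetric] Bset_iff using x_eq r by linarith
qed

definition layer :: "nat \<Rightarrow> nat set \<Rightarrow> nat \<Rightarrow> nat set" where
  "layer s X t = X \<inter> Bset s t"

lemma finite_layer: "finite X \<Longrightarrow> finite (layer s X t)"
  unfolding layer_def by simp

lemma layers_cover:
  assumes "step_closed s X" "0 \<notin> X" "0 < s"
  shows "X = (\<Union>t<s div 2. layer s X t)"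
  using step_closed_in_blocks[OF assms(1,2) _ assms(3)] unfolding layer_def by blast

lemma layers_disjoint: "t \<noteq> t' \<Longrightarrow> layer s X t \<inter> layer s X t' = {}"
  unfolding layer_def using Bset_disjoint by blast

lemma card_layer_le: "finite X \<Longrightarrow> card (layer s X t) \<le> s - 1"
  unfolding layer_def by (rule card_subset_Bset) auto

text \<open>A nonempty layer is at least two smaller than the layer below it: with q its
  maximum, the layer below contains the shifts x - (s+2) of all its elements, which
  are at most q - (s+2), together with q - (s+1) and q - s.\<close>
lemma layer_card_step:
  assumes closed: "step_closed s X" and fin: "finite X"
    and ne: "layer s X (Suc t) \<noteq> {}"
  shows "card (layer s X (Suc t)) + 2 \<le> card (layer s X t)"
proof -
  let ?A = "layer s X (Suc t)" and ?B = "layer s X t"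
  have finA: "finite ?A" using fin unfolding layer_def by simp
  define q where "q = Max ?A"
  have qA: "q \<in> ?A" using Max_in[OF finA ne] q_def by simp
  have down: "a \<le> x \<and> x - a \<in> ?B" if "x \<in> ?A" "a \<in> {s, s+1, s+2}" for x a
    using Bset_step_down[of x s t a] closed that unfolding layer_def step_closed_def by blast
  define shifted where "shifted = (\<lambda>x. x - (s+2)) ` ?A"
  have "inj_on (\<lambda>x. x - (s+2)) ?A"
  proof (rule inj_onI)
    fix x y assume "x \<in> ?A" "y \<in> ?A" "x - (s+2) = y - (s+2)"
    moreover have "s + 2 \<le> x" "s + 2 \<le> y" using down calculation(1,2) by auto
    ultimately show "x = y" by linarith
  qed
  then have card_shifted: "card shifted = card ?A" unfolding shifted_def by (simp add: card_image)
  have q_big: "s + 2 \<le> q" using down[OF qA] by simp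
  have shifted_le: "y \<le> q - (s+2)" if "y \<in> shifted" for y
    using that Max_ge[OF finA] unfolding shifted_def q_def by (auto intro: diff_le_mono)
  have "shifted \<union> {q - (s+1), q - s} \<subseteq> ?B"
    using down[OF qA] down unfolding shifted_def by auto
  then have "card (shifted \<union> {q - (s+1), q - s}) \<le> card ?B"
    using fin unfolding layer_def by (intro card_mono) auto
  moreover have "card (shifted \<union> {q - (s+1), q - s}) = card shifted + 2"
    using shifted_le q_big finA unfolding shifted_def by (fastforce simp: card_insert_if)
  ultimately show ?thesis using card_shifted by simp
qed

section \<open>Compression into top segments\<close>

text \<open>Among all m-element subsets of {..<u}, the top segment {u-m..<u} has the largest
  sum, and it is the only one attaining it: elements outside the segment are all
  smaller than those of the segment missed by A.\<close>
lemma sum_le_top_segment: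
  assumes fin: "finite A" and A_sub: "A \<subseteq> {..<u}"
  shows "\<Sum>A \<le> \<Sum>{u - card A..<u}"
    and "A \<noteq> {u - card A..<u} \<Longrightarrow> \<Sum>A < \<Sum>{u - card A..<u}"
proof -
  define T where "T = {u - card A..<u}"
  have "card A \<le> u" using card_mono[OF _ A_sub] by simp
  then have card_T: "card T = card A" unfolding T_def by simp
  have finT: "finite T" unfolding T_def by simp
  have card_diff: "card (A - T) = card (T - A)"
    using card_T fin finT by (simp add: card_Diff_subset_Int Int_commute)
  have below: "x < u - card A" if "x \<in> A - T" for x using that A_sub unfolding T_def by auto
  have above: "u - card A \<le> x" if "x \<in> T - A" for x using that unfolding T_def by auto
  have sum_A: "\<Sum>A = \<Sum>(A \<inter> T) + \<Sum>(A - T)"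
    using sum.Int_Diff[OF fin, of id T] by simp
  have sum_T: "\<Sum>T = \<Sum>(A \<inter> T) + \<Sum>(T - A)"
    using sum.Int_Diff[OF finT, of id A] by (simp add: Int_commute)
  have upper: "\<Sum>(A - T) \<le> card (A - T) * (u - card A)"
    using sum_bounded_above[of "A - T" id "u - card A"] below by (simp add: less_imp_le)
  have lower: "card (T - A) * (u - card A) \<le> \<Sum>(T - A)"
    using sum_bounded_below[of "T - A" "u - card A" id] above by simp
  show "\<Sum>A \<le> \<Sum>{u - card A..<u}"
    using sum_A sum_T upper lower card_diff unfolding T_def[symmetric] by simp
  assume "A \<noteq> {u - card A..<u}"
  then have "A - T \<noteq> {}" using card_subset_eq[OF finT _ card_T[symmetric]] T_def by blast
  then have "\<Sum>(A - T) < (\<Sum>x\<in>A - T. u - card A)"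
    using fin below by (intro sum_strict_mono) auto
  then show "\<Sum>A < \<Sum>{u - card A..<u}"
    using sum_A sum_T lower card_diff unfolding T_def[symmetric] by simp
qed

definition top_segment :: "nat \<Rightarrow> nat \<Rightarrow> nat \<Rightarrow> nat set" where
  "top_segment s t m = {(t+1)*s - m..<(t+1)*s}"

lemma top_segment_bounds:
  "m \<le> s - 1 \<Longrightarrow> x \<in> top_segment s t m \<Longrightarrow> t*s + 1 \<le> x \<and> x < (t+1)*s"
  unfolding top_segment_def by (cases s) auto

lemma top_segments_disjoint:
  assumes "m \<le> s - 1" "m' \<le> s - 1" "t \<noteq> t'"
  shows "top_segment s t m \<inter> top_segment s t' m' = {}"
proof -
  have "x div s = t" if "x \<in> top_segment s t m" "m \<le> s - 1" for x t m
    using top_segment_bounds[OF that(2,1)] by (intro div_nat_eqI) (auto simp: algebra_simps)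
  then show ?thesis using assms by blast
qed

lemma finite_top_segment [simp]: "finite (top_segment s t m)"
  unfolding top_segment_def by simp

lemma card_top_segment: "m \<le> s - 1 \<Longrightarrow> card (top_segment s t m) = m"
  unfolding top_segment_def by (cases s) auto

definition compress :: "nat \<Rightarrow> nat set \<Rightarrow> nat set" where
  "compress s X = (\<Union>t<s div 2. top_segment s t (card (layer s X t)))"

lemma compress_segments_disjoint:
  "finite X \<Longrightarrow> t \<noteq> t' \<Longrightarrow>
    top_segment s t (card (layer s X t)) \<inter> top_segment s t' (card (layer s X t')) = {}"
  by (intro top_segments_disjoint card_layer_le)

lemma compress_finite: "finite (compress s X)"
  unfolding compress_def by simp

lemma compress_pos: "finite X \<Longrightarrow> 0 \<notin> compress s X"
  unfolding compress_def using top_segment_bounds[OF card_layer_le] by fastforce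

lemma compress_card:
  assumes "step_closed s X" "0 \<notin> X" "finite X" "0 < s"
  shows "card (compress s X) = card X"
proof -
  have "card (compress s X) = (\<Sum>t<s div 2. card (top_segment s t (card (layer s X t))))"
    unfolding compress_def
    by (rule card_UN_disjoint) (auto simp: compress_segments_disjoint assms(3))
  also have "\<dots> = (\<Sum>t<s div 2. card (layer s X t))"
    using card_top_segment[OF card_layer_le[OF assms(3)]] by simp
  also have "\<dots> = card (\<Union>t<s div 2. layer s X t)"
    using assms(3) by (intro card_UN_disjoint[symmetric]) (auto simp: finite_layer layers_disjoint)
  finally show ?thesis using layers_cover[OF assms(1,2,4)] by simp
qed

lemma compress_sum_less:
  assumes "step_closed s X" "0 \<notin> X" "finite X" "0 < s" "k < s div 2"
    and not_top: "layer s X k \<noteq> top_segment s k (card (layer s X k))"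
  shows "\<Sum>X < \<Sum>(compress s X)"
proof -
  let ?T = "\<lambda>t. top_segment s t (card (layer s X t))"
  note fin_layer = finite_layer[OF assms(3)]
  have layer_below: "layer s X t \<subseteq> {..<(t+1)*s}" for t
    using Bset_subset[of s t] unfolding layer_def by auto
  have "\<Sum>X = (\<Sum>t<s div 2. \<Sum>(layer s X t))"
    by (subst layers_cover[OF assms(1,2,4)], rule sum.UNION_disjoint)
      (auto simp: fin_layer layers_disjoint)
  also have "\<dots> < (\<Sum>t<s div 2. \<Sum>(?T t))"
  proof (rule sum_strict_mono_ex1)
    show "\<forall>t\<in>{..<s div 2}. \<Sum>(layer s X t) \<le> \<Sum>(?T t)"
      using sum_le_top_segment(1)[OF fin_layer layer_below] by (simp add: top_segment_def)
    show "\<exists>t\<in>{..<s div 2}. \<Sum>(layer s X t) < \<Sum>(?T t)"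
      using sum_le_top_segment(2)[OF fin_layer layer_below] not_top assms(5)
      by (auto simp: top_segment_def)
  qed simp
  also have "\<dots> = \<Sum>(compress s X)"
    unfolding compress_def
    by (rule sum.UNION_disjoint[symmetric]) (auto simp: compress_segments_disjoint assms(3))
  finally show ?thesis .
qed

text \<open>Compression preserves step-closedness: a step from the top segment of block t+1
  lands in the top segment of block t, because the layer of block t is at least two
  elements larger (lemma layer_card_step).\<close>
lemma compress_step_closed:
  assumes closed: "step_closed s X" and fin: "finite X"
  shows "step_closed s (compress s X)"
  unfolding step_closed_def
proof (intro ballI impI)
  let ?m = "\<lambda>t. card (layer s X t)"
  fix x a assume x: "x \<in> compress s X" and a: "a \<in> {s, s+1, s+2}" and ax: "a \<le> x"
  then obtain t where t: "t < s div 2" "x \<in> top_segment s t (?m t)"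
    unfolding compress_def by auto
  note bounds = top_segment_bounds[OF card_layer_le[OF fin] t(2)]
  show "x - a \<in> compress s X"
  proof (cases t)
    case 0
    then show ?thesis using bounds a ax by auto
  next
    case (Suc t')
    have "?m t \<noteq> 0" using t(2) unfolding top_segment_def by auto
    then have "layer s X (Suc t') \<noteq> {}" using Suc by auto
    then have "?m (Suc t') + 2 \<le> ?m t'" using layer_card_step[OF closed fin] by blast
    moreover have "?m t' \<le> s - 1" using card_layer_le[OF fin] .
    moreover have "(t'+2)*s - ?m (Suc t') \<le> x" "x < (t'+2)*s"
      using t(2) Suc unfolding top_segment_def by auto
    ultimately have "x - a \<in> top_segment s t' (?m t')"
      using a ax unfolding top_segment_def by (auto simp: algebra_simps)
    then show ?thesis using t Suc unfolding compress_def by auto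
  qed
qed

text \<open>In a core of maximum size, every layer of the beta-set is a top segment:
  otherwise the compressed beta-set belongs to a larger core with the same number of
  parts.\<close>
lemma max_core_layer_is_top_segment:
  assumes s: "0 < s" and P: "is_partition lam" and core: "is_core3 s lam"
    and max: "\<forall>mu. is_partition mu \<and> is_core3 s mu \<longrightarrow> psize mu \<le> psize lam"
    and k: "k < s div 2"
  shows "layer s (beta lam) k = top_segment s k (card (layer s (beta lam) k))"
proof (rule ccontr)
  let ?X = "beta lam"
  assume not_top: "\<not> ?thesis"
  have closed: "step_closed s ?X" using core_iff_step_closed[OF P s] core by simp
  note X_props = closed zero_notin_beta[OF P] finite_beta[OF P] s
  obtain mu where mu: "is_partition mu" "beta mu = compress s ?X" "length mu = card ?X"
    using beta_surj[OF compress_finite compress_pos[OF finite_beta[OF P]], of s]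
    unfolding compress_card[OF X_props] by blast
  have "is_core3 s mu"
    using core_iff_step_closed[OF mu(1) s] compress_step_closed[OF closed finite_beta[OF P]] mu(2)
    by simp
  moreover have "psize lam < psize mu"
    using psize_less_if_beta_sum_less[OF P mu(1)] compress_sum_less[OF X_props k not_top]
      card_beta[OF P] mu by simp
  ultimately show False using max mu(1) by fastforce
qed

theorem lemma3p1:
  fixes s k i :: nat and lam :: "nat list"
  assumes "s \<ge> 3"
    and "is_partition lam" and "is_core3 s lam"
    and "\<forall>mu. is_partition mu \<and> is_core3 s mu \<longrightarrow> psize mu \<le> psize lam"
    and "k \<le> s div 2 - 1"
    and "i \<in> Bset s k" and "i \<in> beta lam"
  shows "{i .. (k+1)*s - 1} \<subseteq> beta lam"
proof -
  let ?L = "layer s (beta lam) k"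
  define m where "m = card ?L"
  have k: "k < s div 2" using assms(1,5) by linarith
  have top: "?L = top_segment s k m"
    using max_core_layer_is_top_segment[OF _ assms(2-4) k] assms(1) unfolding m_def by simp
  have "i \<in> ?L" using assms(6,7) unfolding layer_def by simp
  then have "(k+1)*s - m \<le> i" unfolding top top_segment_def by simp
  then have "{i .. (k+1)*s - 1} \<subseteq> top_segment s k m"
    using assms(1) unfolding top_segment_def by auto
  then show ?thesis using top unfolding layer_def by blast
qed

end
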